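(* Let Assumptions 1 and 2 hold and $\eta>0$. Define $H:\mathbb{R}^N_{++}\to\mathbb{R}^N_{++}$ by $H(y)=\nabla_\theta\big(e^{\varphi_1(\theta)}\big)\big|_{\theta=\log y}$ (componentwise logarithm), and assume $H$ is a bijection of $\mathbb{R}^N_{++}$ onto itself with inverse $\Phi=H^{-1}$. Let $u_1,\dots,u_T\in\mathbb{R}^N$ be arbitrary and let $x_t=\nabla\varphi_\eta(\theta_{t-1})$, $t=1,\dots,T$, be the SSA (equivalently FTRL) choices. Then $x_t\in\mathbb{R}^N_{++}$ and, writing $\alpha(x)=\log\Phi(x)$ (componentwise), for all $t\ge1$ with $t+1\le T$ and all $j\in A$, $$x_{t+1,j}=\frac{H_j\big(e^{u_t/\eta+\alpha(x_t)}\big)}{\sum_{i=1}^N H_i\big(e^{u_t/\eta+\alpha(x_t)}\big)},$$ where $e^{v}$ denotes the componentwise exponential of a vector $v$.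
   Context: Let $N\ge 2$, $A=\{1,\dots,N\}$, and $\Delta_N=\{x\in\mathbb{R}^N: x_i\ge 0,\ \sum_i x_i=1\}$. Let $\epsilon=(\epsilon_1,\dots,\epsilon_N)$ be a random vector satisfying Assumption 1: each $\epsilon_i$ is integrable with $\mathbb{E}[\epsilon_i]=0$, and the law of $\epsilon$ is absolutely continuous with respect to Lebesgue measure on $\mathbb{R}^N$ with support all of $\mathbb{R}^N$. For $\eta>0$ the social surplus function is $\varphi_\eta(\theta)=\mathbb{E}[\max_{j\in A}(\theta_j+\eta\epsilon_j)]$, $\theta\in\mathbb{R}^N$; thus $\varphi_\eta(\theta)=\eta\varphi_1(\theta/\eta)$. $\varphi_\eta$ is convex and differentiable with $\nabla\varphi_\eta(\theta)\in\Delta_N$. Assumption 2: $\varphi_1$ is twice continuously differentiable and there is a constant $L>0$ with $2\,\mathrm{tr}(\nabla^2\varphi_1(\theta))\le L$ for all $\theta\in\mathbb{R}^N$. Set $\theta_0=0$, $\theta_t=\sum_{s=1}^tu_s$; $\mathbb{R}^N_{++}$ is the set of vectors with all coordinates strictly positive. *)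

theory Defs
  imports "HOL-Analysis.Analysis" "HOL-Probability.Probability"
begin

definition grad :: "(real^'n \<Rightarrow> real) \<Rightarrow> real^'n \<Rightarrow> real^'n" where
  "grad f x = (\<chi> i. frechet_derivative f (at x) (axis i 1))"

definition hess :: "(real^'n \<Rightarrow> real) \<Rightarrow> real^'n \<Rightarrow> real^'n^'n" where
  "hess f x = (\<chi> i j. frechet_derivative (grad f) (at x) (axis j 1) $ i)"

definition C2 :: "(real^'n \<Rightarrow> real) \<Rightarrow> bool" where
  "C2 f \<longleftrightarrow> (\<forall>x. f differentiable (at x)) \<and> (\<forall>x. grad f differentiable (at x))
      \<and> continuous_on UNIV (hess f)"

text \<open>Social surplus function, M is the law of the noise vector epsilon.\<close>
definition ssf :: "(real^'n::finite) measure \<Rightarrow> real \<Rightarrow> real^'n \<Rightarrow> real" where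
  "ssf M \<eta> \<theta> = (\<integral>e. (MAX j. \<theta> $ j + \<eta> * e $ j) \<partial>M)"

definition pos_orthant :: "(real^'n) set" where
  "pos_orthant = {y. \<forall>i. 0 < y $ i}"

definition vexp :: "real^'n \<Rightarrow> real^'n" where
  "vexp v = (\<chi> i. exp (v $ i))"

definition vln :: "real^'n \<Rightarrow> real^'n" where
  "vln v = (\<chi> i. ln (v $ i))"

definition assumption1 :: "(real^'n::finite) measure \<Rightarrow> bool" where
  "assumption1 M \<longleftrightarrow> prob_space M \<and> sets M = sets borel
     \<and> (\<forall>i. integrable M (\<lambda>e. e $ i) \<and> (\<integral>e. e $ i \<partial>M) = 0)
     \<and> absolutely_continuous lborel M
     \<and> (\<forall>U. open U \<and> U \<noteq> {} \<longrightarrow> emeasure M U > 0)"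

definition assumption2 :: "(real^'n::finite) measure \<Rightarrow> real \<Rightarrow> bool" where
  "assumption2 M L \<longleftrightarrow> L > 0 \<and> C2 (ssf M 1) \<and> (\<forall>\<theta>. 2 * trace (hess (ssf M 1) \<theta>) \<le> L)"

end

theory Submission
  imports Defs
begin

text \<open>Shifting all coordinates by \<open>c\<close> shifts the maximum by \<open>c\<close>, and \<open>\<epsilon>\<close> has a probability
  law, so \<open>\<phi>\<^sub>1(\<theta> + c1) = \<phi>\<^sub>1(\<theta>) + c\<close>: hence \<open>\<nabla>\<phi>\<^sub>1\<close> is invariant along \<open>1\<close> and its coordinates
  sum to \<open>1\<close>. By the chain rule \<open>H(e\<^sup>v) = e\<^bsup>\<phi>\<^sub>1(v)\<^esup> \<nabla>\<phi>\<^sub>1(v)\<close>, so normalising \<open>H(e\<^sup>v)\<close> gives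
  \<open>\<nabla>\<phi>\<^sub>1(v)\<close>, and \<open>H\<close> maps \<open>e\<^bsup>v - \<phi>\<^sub>1(v)1\<^esup>\<close> to \<open>\<nabla>\<phi>\<^sub>1(v)\<close>. By homogeneity
  \<open>x\<^sub>t = \<nabla>\<phi>\<^sub>1(\<theta>\<^sub>t\<^sub>-\<^sub>1/\<eta>)\<close>, so \<open>\<alpha>(x\<^sub>t) = \<theta>\<^sub>t\<^sub>-\<^sub>1/\<eta> - c1\<close> for a scalar \<open>c\<close>, and adding \<open>u\<^sub>t/\<eta>\<close> lands
  at \<open>\<theta>\<^sub>t/\<eta> - c1\<close>, where the normalised \<open>H\<close> is \<open>\<nabla>\<phi>\<^sub>1(\<theta>\<^sub>t/\<eta>) = x\<^sub>t\<^sub>+\<^sub>1\<close>. Positivity of \<open>x\<^sub>t\<close>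
  comes from \<open>H\<close> preserving the positive orthant.\<close>

lemma Max_mult_left:
  fixes g :: "'i::finite \<Rightarrow> real"
  assumes "c \<ge> 0"
  shows "(MAX j. c * g j) = c * (MAX j. g j)"
proof -
  have "mono ((*) c)"
    using assms by (auto simp: mono_def mult_left_mono)
  then show ?thesis
    using mono_Max_commute[of "(*) c" "range g"] by (simp add: image_image)
qed

lemma integrable_Max:
  fixes g :: "'i::finite \<Rightarrow> 'a \<Rightarrow> real"
  assumes "\<And>j. integrable M (g j)"
  shows "integrable M (\<lambda>x. MAX j. g j x)"
proof (rule Bochner_Integration.integrable_bound)
  show "integrable M (\<lambda>x. \<Sum>j\<in>UNIV. \<bar>g j x\<bar>)"
    using assms by auto
  show "(\<lambda>x. MAX j. g j x) \<in> borel_measurable M"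
    using assms by (intro borel_measurable_Max) auto
  have "norm (MAX j. g j x) \<le> norm (\<Sum>j\<in>UNIV. \<bar>g j x\<bar>)" for x
  proof -
    have "(MAX j. g j x) \<in> range (\<lambda>j. g j x)"
      by (rule Max_in) auto
    then obtain j0 where "(MAX j. g j x) = g j0 x"
      by blast
    moreover have "\<bar>g j0 x\<bar> \<le> (\<Sum>j\<in>UNIV. \<bar>g j x\<bar>)"
      by (rule member_le_sum) auto
    ultimately show ?thesis
      by (simp add: sum_nonneg)
  qed
  then show "AE x in M. norm (MAX j. g j x) \<le> norm (\<Sum>j\<in>UNIV. \<bar>g j x\<bar>)"
    by simp
qed

lemma ssf_rescale:
  assumes "\<eta> > 0"
  shows "ssf M \<eta> \<theta> = \<eta> * ssf M 1 ((1/\<eta>) *\<^sub>R \<theta>)"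
proof -
  have "(MAX j. \<theta> $ j + \<eta> * e $ j) = \<eta> * (MAX j. ((1/\<eta>) *\<^sub>R \<theta>) $ j + 1 * e $ j)" for e
    using assms Max_mult_left[of \<eta> "\<lambda>j. ((1/\<eta>) *\<^sub>R \<theta>) $ j + e $ j"]
    by (simp add: algebra_simps)
  then show ?thesis
    by (simp add: ssf_def)
qed

lemma ssf_translate:
  assumes "prob_space M" and "\<And>i. integrable M (\<lambda>e. e $ i)"
  shows "ssf M \<eta> (\<theta> + c *\<^sub>R 1) = ssf M \<eta> \<theta> + c"
proof -
  interpret prob_space M by fact
  have "(MAX j. (\<theta> + c *\<^sub>R 1) $ j + \<eta> * e $ j) = (MAX j. \<theta> $ j + \<eta> * e $ j) + c" for e
    using Max_add_commute[of UNIV "\<lambda>j. \<theta> $ j + \<eta> * e $ j" c]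
    by (simp add: one_vec_def algebra_simps)
  moreover have "integrable M (\<lambda>e. MAX j. \<theta> $ j + \<eta> * e $ j)"
    using assms(2) by (intro integrable_Max) auto
  ultimately show ?thesis
    by (simp add: ssf_def prob_space)
qed

lemma grad_eqI:
  assumes "(f has_derivative D) (at x)"
  shows "grad f x = (\<chi> i. D (axis i 1))"
  using frechet_derivative_at[OF assms] by (simp add: grad_def)

lemma sum_grad:
  fixes f :: "real^'n \<Rightarrow> real"
  assumes "f differentiable (at x)"
  shows "(\<Sum>i\<in>UNIV. grad f x $ i) = frechet_derivative f (at x) 1"
proof -
  let ?D = "frechet_derivative f (at x)"
  have "(1::real^'n) = (\<Sum>i\<in>UNIV. axis i 1)"
    by (simp add: vec_eq_iff axis_def one_vec_def)
  then have "?D 1 = (\<Sum>i\<in>UNIV. ?D (axis i 1))"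
    by (metis linear_sum[OF linear_frechet_derivative[OF assms]])
  then show ?thesis
    by (simp add: grad_def)
qed

lemma grad_exp:
  fixes f :: "real^'n \<Rightarrow> real"
  assumes "f differentiable (at x)"
  shows "grad (\<lambda>\<theta>. exp (f \<theta>)) x = exp (f x) *\<^sub>R grad f x"
proof -
  have "((\<lambda>\<theta>. exp (f \<theta>)) has_derivative (\<lambda>h. exp (f x) * frechet_derivative f (at x) h)) (at x)"
    using assms unfolding frechet_derivative_works by (auto intro!: derivative_eq_intros)
  from grad_eqI[OF this] show ?thesis
    by (simp add: grad_def vec_eq_iff)
qed

lemma grad_rescale:
  fixes f :: "real^'n \<Rightarrow> real"
  assumes "f differentiable (at ((1/\<eta>) *\<^sub>R x))" and "\<eta> \<noteq> 0"
  shows "grad (\<lambda>\<theta>. \<eta> * f ((1/\<eta>) *\<^sub>R \<theta>)) x = grad f ((1/\<eta>) *\<^sub>R x)"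
proof -
  let ?D = "frechet_derivative f (at ((1/\<eta>) *\<^sub>R x))"
  have "((\<lambda>\<theta>. (1/\<eta>) *\<^sub>R \<theta>) has_derivative (\<lambda>h. (1/\<eta>) *\<^sub>R h)) (at x)"
    by (intro derivative_eq_intros) auto
  from has_derivative_compose[OF this assms(1)[unfolded frechet_derivative_works]]
  have "((\<lambda>\<theta>. \<eta> * f ((1/\<eta>) *\<^sub>R \<theta>)) has_derivative (\<lambda>h. \<eta> * ?D ((1/\<eta>) *\<^sub>R h))) (at x)"
    by (auto intro!: derivative_eq_intros)
  moreover have "(\<lambda>h. \<eta> * ?D ((1/\<eta>) *\<^sub>R h)) = ?D"
    using assms linear_scale[OF linear_frechet_derivative[OF assms(1)]] by auto
  ultimately have "((\<lambda>\<theta>. \<eta> * f ((1/\<eta>) *\<^sub>R \<theta>)) has_derivative ?D) (at x)"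
    by simp
  from grad_eqI[OF this] show ?thesis
    by (simp add: grad_def)
qed

lemma vln_vexp [simp]: "vln (vexp v) = v"
  by (simp add: vln_def vexp_def vec_eq_iff)

lemma vexp_in_pos_orthant [simp]: "vexp v \<in> pos_orthant"
  by (simp add: pos_orthant_def vexp_def)

lemma scaleR_in_pos_orthant_iff:
  fixes y :: "real^'n"
  assumes "c > 0"
  shows "c *\<^sub>R y \<in> pos_orthant \<longleftrightarrow> y \<in> pos_orthant"
  using assms by (simp add: pos_orthant_def zero_less_mult_iff)

context
  fixes f :: "real^'n \<Rightarrow> real"
  assumes differentiable: "\<And>x. f differentiable (at x)"
    and translate: "\<And>x c. f (x + c *\<^sub>R 1) = f x + c"
begin

lemma grad_translate: "grad f (x + c *\<^sub>R 1) = grad f x"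
proof -
  have "((\<lambda>y. y + c *\<^sub>R 1) has_derivative (\<lambda>h. h)) (at x)"
    by (intro derivative_eq_intros) auto
  from has_derivative_compose[OF this differentiable[unfolded frechet_derivative_works]]
  have "((\<lambda>y. f (y + c *\<^sub>R 1)) has_derivative frechet_derivative f (at (x + c *\<^sub>R 1))) (at x)"
    by simp
  moreover have "((\<lambda>y. f (y + c *\<^sub>R 1)) has_derivative frechet_derivative f (at x)) (at x)"
    using differentiable unfolding translate frechet_derivative_works
    by (auto intro!: derivative_eq_intros)
  ultimately show ?thesis
    using has_derivative_unique by (metis grad_def)
qed

lemma sum_grad_eq_1: "(\<Sum>i\<in>UNIV. grad f x $ i) = 1"
proof -
  let ?D = "frechet_derivative f (at x)"
  have "((\<lambda>t. x + t *\<^sub>R 1) has_derivative (\<lambda>t. t *\<^sub>R 1)) (at 0)"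
    by (intro derivative_eq_intros) auto
  from has_derivative_compose[OF this, of f] differentiable[unfolded frechet_derivative_works]
  have "((\<lambda>t. f (x + t *\<^sub>R 1)) has_derivative (\<lambda>t. ?D (t *\<^sub>R 1))) (at 0)"
    by simp
  moreover have "((\<lambda>t. f (x + t *\<^sub>R 1)) has_derivative (\<lambda>t. t)) (at 0)"
    unfolding translate by (auto intro!: derivative_eq_intros)
  ultimately have "?D 1 = 1"
    using has_derivative_unique by (metis scaleR_one)
  then show ?thesis
    using sum_grad[OF differentiable] by simp
qed

context
  fixes H :: "real^'n \<Rightarrow> real^'n"
  assumes H_def: "H = (\<lambda>y. grad (\<lambda>\<theta>. exp (f \<theta>)) (vln y))"
begin

lemma H_vexp: "H (vexp v) = exp (f v) *\<^sub>R grad f v"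
  by (simp add: H_def grad_exp differentiable)

lemma H_vexp_div_sum: "H (vexp v) $ j / (\<Sum>i\<in>UNIV. H (vexp v) $ i) = grad f v $ j"
  by (simp add: H_vexp sum_distrib_left[symmetric] sum_grad_eq_1)

lemma grad_in_pos_orthant:
  assumes "H ` pos_orthant \<subseteq> pos_orthant"
  shows "grad f v \<in> pos_orthant"
proof -
  have "H (vexp v) \<in> pos_orthant"
    using assms by auto
  then show ?thesis
    by (simp add: H_vexp scaleR_in_pos_orthant_iff)
qed

lemma vln_the_inv_into_H_grad:
  assumes "inj_on H pos_orthant"
  shows "vln (the_inv_into pos_orthant H (grad f v)) = v - f v *\<^sub>R 1"
proof -
  have "H (vexp (v - f v *\<^sub>R 1)) = grad f v"
    using translate[of v "- f v"] grad_translate[of v "- f v"] by (simp add: H_vexp)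
  from the_inv_into_f_eq[OF assms this vexp_in_pos_orthant] show ?thesis
    by simp
qed

text \<open>The normalised \<open>H\<close> undoes the mirror map up to the shift along \<open>1\<close>, which \<open>\<nabla>f\<close> ignores.\<close>

lemma H_vexp_update_div_sum:
  fixes v d :: "real^'n"
  assumes inj: "inj_on H pos_orthant"
  defines "y \<equiv> H (vexp (d + vln (the_inv_into pos_orthant H (grad f v))))"
  shows "y $ j / (\<Sum>i\<in>UNIV. y $ i) = grad f (v + d) $ j"
proof -
  have shift: "d + vln (the_inv_into pos_orthant H (grad f v)) = (v + d) + (- f v) *\<^sub>R 1"
    by (simp add: vln_the_inv_into_H_grad[OF inj])
  show ?thesis
    unfolding y_def H_vexp_div_sum shift grad_translate ..
qed

end

end

theorem proposition4:
  fixes M :: "(real^'n::finite) measure" and L \<eta> :: real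
    and u :: "nat \<Rightarrow> real^'n" and T :: nat
    and H \<Phi> \<alpha> :: "real^'n \<Rightarrow> real^'n"
    and \<theta>s x :: "nat \<Rightarrow> real^'n"
  assumes "CARD('n) \<ge> 2"
    and "assumption1 M" and "assumption2 M L" and "\<eta> > 0"
    and H_def: "H = (\<lambda>y. grad (\<lambda>\<theta>. exp (ssf M 1 \<theta>)) (vln y))"
    and "bij_betw H pos_orthant pos_orthant"
    and \<Phi>_def: "\<Phi> = the_inv_into pos_orthant H"
    and \<theta>s_def: "\<theta>s = (\<lambda>t. \<Sum>s=1..t. u s)"
    and x_def: "x = (\<lambda>t. grad (ssf M \<eta>) (\<theta>s (t - 1)))"
    and \<alpha>_def: "\<alpha> = (\<lambda>y. vln (\<Phi> y))"
  shows "(\<forall>t\<in>{1..T}. x t \<in> pos_orthant) \<and>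
    (\<forall>t. 1 \<le> t \<and> t + 1 \<le> T \<longrightarrow> (\<forall>j.
       x (t + 1) $ j = H (vexp ((1 / \<eta>) *\<^sub>R u t + \<alpha> (x t))) $ j
         / (\<Sum>i\<in>UNIV. H (vexp ((1 / \<eta>) *\<^sub>R u t + \<alpha> (x t))) $ i)))"
proof -
  define f where "f = ssf M 1"
  have f_differentiable: "\<And>v. f differentiable (at v)"
    using assms(3) by (simp add: assumption2_def C2_def f_def)
  have f_translate: "\<And>v c. f (v + c *\<^sub>R 1) = f v + c"
    using assms(2) by (simp add: assumption1_def f_def ssf_translate)
  have "ssf M \<eta> = (\<lambda>\<theta>. \<eta> * f ((1/\<eta>) *\<^sub>R \<theta>))"
    using ssf_rescale[OF \<open>\<eta> > 0\<close>, of M, folded f_def] by (intro ext)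
  then have x_eq: "\<And>t. x t = grad f ((1/\<eta>) *\<^sub>R \<theta>s (t - 1))"
    using \<open>\<eta> > 0\<close> by (simp add: x_def grad_rescale f_differentiable)
  have H_f: "H = (\<lambda>y. grad (\<lambda>\<theta>. exp (f \<theta>)) (vln y))"
    by (simp add: H_def f_def)
  have H_inj: "inj_on H pos_orthant" and H_pos: "H ` pos_orthant \<subseteq> pos_orthant"
    using \<open>bij_betw H pos_orthant pos_orthant\<close> by (auto simp: bij_betw_def)
  show ?thesis
  proof (intro conjI ballI allI impI)
    show "x t \<in> pos_orthant" for t
      using grad_in_pos_orthant[OF f_differentiable f_translate H_f H_pos] by (simp add: x_eq)
  next
    fix t j
    assume "1 \<le> t \<and> t + 1 \<le> T"
    then have "(1/\<eta>) *\<^sub>R \<theta>s t = (1/\<eta>) *\<^sub>R \<theta>s (t - 1) + (1/\<eta>) *\<^sub>R u t"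
      by (cases t) (auto simp: \<theta>s_def scaleR_right_distrib)
    then show "x (t + 1) $ j = H (vexp ((1 / \<eta>) *\<^sub>R u t + \<alpha> (x t))) $ j
         / (\<Sum>i\<in>UNIV. H (vexp ((1 / \<eta>) *\<^sub>R u t + \<alpha> (x t))) $ i)"
      using H_vexp_update_div_sum[OF f_differentiable f_translate H_f H_inj]
      by (simp add: x_eq \<alpha>_def \<Phi>_def)
  qed
qed

end
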